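(* For all $w,k\in\mathbb{N}$ and $s\in\mathbb{N}_0$ there exists a graph $G$ with $\operatorname{tw}(G)\le k$ such that for every $(\le s)$-subdivision $G'$ of $G$, every graph $H$, and every $H$-partition of $G'$ with layered width at most $w$, the graph $H$ contains $K_{k+1}$ as a minor (and hence $\operatorname{tw}(H)\ge k$). *)

theory Defs
  imports Main
begin

definition graph :: "'a set \<Rightarrow> 'a set set \<Rightarrow> bool" where
  "graph V E \<longleftrightarrow> finite V \<and> (\<forall>e\<in>E. \<exists>u v. e = {u, v} \<and> u \<noteq> v \<and> u \<in> V \<and> v \<in> V)"

definition walk :: "'a set set \<Rightarrow> 'a list \<Rightarrow> bool" where
  "walk E xs \<longleftrightarrow> (\<forall>i. Suc i < length xs \<longrightarrow> {xs ! i, xs ! Suc i} \<in> E)"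

definition connected_in :: "'a set set \<Rightarrow> 'a set \<Rightarrow> bool" where
  "connected_in E S \<longleftrightarrow> S \<noteq> {} \<and>
     (\<forall>u\<in>S. \<forall>v\<in>S. \<exists>xs. xs \<noteq> [] \<and> hd xs = u \<and> last xs = v \<and> set xs \<subseteq> S \<and> walk E xs)"

definition is_cycle :: "'a set set \<Rightarrow> 'a list \<Rightarrow> bool" where
  "is_cycle E xs \<longleftrightarrow> length xs \<ge> 3 \<and> distinct xs \<and> walk E xs \<and> {last xs, hd xs} \<in> E"

definition tree :: "'a set \<Rightarrow> 'a set set \<Rightarrow> bool" where
  "tree T TE \<longleftrightarrow> graph T TE \<and> connected_in TE T \<and> \<not> (\<exists>xs. is_cycle TE xs)"

definition tree_decomposition ::
  "'a set \<Rightarrow> 'a set set \<Rightarrow> 't set \<Rightarrow> 't set set \<Rightarrow> ('t \<Rightarrow> 'a set) \<Rightarrow> bool" where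
  "tree_decomposition V E T TE \<beta> \<longleftrightarrow> tree T TE \<and> (\<forall>t\<in>T. \<beta> t \<subseteq> V) \<and>
     (\<forall>v\<in>V. connected_in TE {t\<in>T. v \<in> \<beta> t}) \<and>
     (\<forall>e\<in>E. \<exists>t\<in>T. e \<subseteq> \<beta> t)"

definition tw_le :: "'a set \<Rightarrow> 'a set set \<Rightarrow> nat \<Rightarrow> bool" where
  "tw_le V E k \<longleftrightarrow> (\<exists>(T::nat set) TE \<beta>. tree_decomposition V E T TE \<beta> \<and>
                        (\<forall>t\<in>T. card (\<beta> t) \<le> k + 1))"

definition has_complete_minor :: "'a set \<Rightarrow> 'a set set \<Rightarrow> nat \<Rightarrow> bool" where
  "has_complete_minor V E n \<longleftrightarrow> (\<exists>B :: nat \<Rightarrow> 'a set.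
     (\<forall>i<n. B i \<subseteq> V \<and> connected_in E (B i)) \<and>
     (\<forall>i<n. \<forall>j<n. i \<noteq> j \<longrightarrow> B i \<inter> B j = {} \<and> (\<exists>u\<in>B i. \<exists>v\<in>B j. {u, v} \<in> E)))"

definition inner_verts :: "'a list \<Rightarrow> 'a list" where
  "inner_verts xs = butlast (tl xs)"

definition path_edges :: "'a list \<Rightarrow> 'a set set" where
  "path_edges xs = {{xs ! i, xs ! Suc i} | i. Suc i < length xs}"

text \<open>(V',E') is a (\<le> s)-subdivision of (V,E): each edge is replaced by a path
  with at most s (new) internal vertices; the original vertices are embedded via phi.\<close>
definition subdivision_le ::
  "nat \<Rightarrow> 'a set \<Rightarrow> 'a set set \<Rightarrow> 'b set \<Rightarrow> 'b set set \<Rightarrow> bool" where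
  "subdivision_le s V E V' E' \<longleftrightarrow> (\<exists>(\<phi> :: 'a \<Rightarrow> 'b) (P :: 'a set \<Rightarrow> 'b list).
     inj_on \<phi> V \<and> \<phi> ` V \<subseteq> V' \<and>
     (\<forall>e\<in>E. \<exists>u v. e = {u, v} \<and> hd (P e) = \<phi> u \<and> last (P e) = \<phi> v) \<and>
     (\<forall>e\<in>E. P e \<noteq> [] \<and> distinct (P e) \<and> length (P e) \<le> s + 2 \<and>
             set (inner_verts (P e)) \<inter> \<phi> ` V = {}) \<and>
     (\<forall>e\<in>E. \<forall>e'\<in>E. e \<noteq> e' \<longrightarrow> set (inner_verts (P e)) \<inter> set (inner_verts (P e')) = {}) \<and>
     V' = \<phi> ` V \<union> (\<Union>e\<in>E. set (P e)) \<and>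
     E' = (\<Union>e\<in>E. path_edges (P e)))"

text \<open>An H-partition of G, given by the map f sending each vertex of G to the
  index (a vertex of H) of its part.\<close>
definition H_partition ::
  "'a set \<Rightarrow> 'a set set \<Rightarrow> 'h set \<Rightarrow> 'h set set \<Rightarrow> ('a \<Rightarrow> 'h) \<Rightarrow> bool" where
  "H_partition V E VH EH f \<longleftrightarrow> f ` V \<subseteq> VH \<and>
     (\<forall>u\<in>V. \<forall>v\<in>V. {u, v} \<in> E \<longrightarrow> f u = f v \<or> {f u, f v} \<in> EH)"

definition layering :: "'a set \<Rightarrow> 'a set set \<Rightarrow> ('a \<Rightarrow> nat) \<Rightarrow> bool" where
  "layering V E L \<longleftrightarrow> (\<forall>u\<in>V. \<forall>v\<in>V. {u, v} \<in> E \<longrightarrow> L u \<le> L v + 1 \<and> L v \<le> L u + 1)"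

definition layered_width_le :: "'a set \<Rightarrow> 'a set set \<Rightarrow> ('a \<Rightarrow> 'h) \<Rightarrow> nat \<Rightarrow> bool" where
  "layered_width_le V E f w \<longleftrightarrow> (\<exists>L. layering V E L \<and>
     (\<forall>x i. card {v\<in>V. f v = x \<and> L v = i} \<le> w))"

end

theory Submission
  imports Defs "HOL-Library.Countable"
begin

text \<open>Let G be the closure of the complete n-ary tree of depth k, in which every node is
  adjacent to all of its ancestors. The tree itself, with the root-to-node paths as bags, is a
  tree decomposition of width k. In a (\<le> s)-subdivision of G every vertex lies within distance
  2s+2 of the root, so every part of an H-partition of layered width w has at most (4s+5)w
  vertices. For a node x let A(x) consist of x together with the subdivision paths from x to
  its ancestors, the ancestors themselves removed: it is connected, contains a neighbour of each
  ancestor, and A(x), A(y) are disjoint for siblings x, y. As n exceeds the number of vertices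
  in the parts met by A(x_0), ..., A(x_j), some child x_(j+1) of x_j has A(x_(j+1)) avoiding
  these parts. Greedily this gives a root-to-leaf path x_0, ..., x_k along which the sets of
  parts met by the A(x_i) are pairwise disjoint; they are the branch sets of a K_(k+1) minor
  of H.\<close>

section \<open>Walks and connectivity\<close>

definition adj_in :: "'a set set \<Rightarrow> 'a set \<Rightarrow> 'a \<Rightarrow> 'a \<Rightarrow> bool" where
  "adj_in E S x y \<longleftrightarrow> x \<in> S \<and> y \<in> S \<and> {x, y} \<in> E"

lemma adj_in_sym: "adj_in E S x y \<Longrightarrow> adj_in E S y x"
  by (auto simp: adj_in_def insert_commute)

lemma rtranclp_adj_in_sym: "(adj_in E S)\<^sup>*\<^sup>* x y \<Longrightarrow> (adj_in E S)\<^sup>*\<^sup>* y x"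
  by (induction rule: rtranclp_induct)
    (auto intro: adj_in_sym converse_rtranclp_into_rtranclp)

lemma rtranclp_adj_in_mono:
  "(adj_in E S)\<^sup>*\<^sup>* x y \<Longrightarrow> S \<subseteq> S' \<Longrightarrow> (adj_in E S')\<^sup>*\<^sup>* x y"
proof (induction rule: rtranclp_induct)
  case (step y z)
  then have "adj_in E S' y z" by (auto simp: adj_in_def)
  then show ?case using step by (meson rtranclp.rtrancl_into_rtrancl)
qed simp

lemma rtranclp_adj_in_image:
  assumes "(adj_in E S)\<^sup>*\<^sup>* a b"
    and "\<forall>x\<in>S. \<forall>y\<in>S. {x, y} \<in> E \<longrightarrow> f x = f y \<or> {f x, f y} \<in> EH"
  shows "(adj_in EH (f ` S))\<^sup>*\<^sup>* (f a) (f b)"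
  using assms(1)
proof (induction rule: rtranclp_induct)
  case (step y z)
  then have "f y = f z \<or> adj_in EH (f ` S) (f y) (f z)"
    using assms(2) by (auto simp: adj_in_def)
  then show ?case using step by (metis rtranclp.rtrancl_into_rtrancl)
qed simp

lemma walk_Cons: "walk E (x # y # xs) \<longleftrightarrow> {x, y} \<in> E \<and> walk E (y # xs)"
  unfolding walk_def by (auto simp: less_Suc_eq_0_disj)

lemma walk_drop: "walk E xs \<Longrightarrow> walk E (drop j xs)"
  unfolding walk_def by simp

lemma walk_rev: "walk E xs \<Longrightarrow> walk E (rev xs)"
proof (unfold walk_def, intro allI impI)
  fix i assume walk: "\<forall>i. Suc i < length xs \<longrightarrow> {xs ! i, xs ! Suc i} \<in> E"
    and i: "Suc i < length (rev xs)"
  define m where "m = length xs - Suc (Suc i)"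
  have "Suc m < length xs" "rev xs ! i = xs ! Suc m" "rev xs ! Suc i = xs ! m"
    using i by (auto simp: m_def rev_nth Suc_diff_Suc)
  then show "{rev xs ! i, rev xs ! Suc i} \<in> E"
    using walk by (auto simp: insert_commute)
qed

lemma walk_rtranclp_adj_in:
  "walk E xs \<Longrightarrow> xs \<noteq> [] \<Longrightarrow> set xs \<subseteq> S \<Longrightarrow> (adj_in E S)\<^sup>*\<^sup>* (hd xs) (last xs)"
proof (induction xs rule: induct_list012)
  case (3 x y zs)
  then have "(adj_in E S)\<^sup>*\<^sup>* y (last (y # zs))" by (simp add: walk_Cons)
  moreover have "adj_in E S x y" using 3 by (simp add: walk_Cons adj_in_def)
  ultimately show ?case by (simp add: converse_rtranclp_into_rtranclp)
qed simp_all

lemma rtranclp_adj_in_walk: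
  "(adj_in E S)\<^sup>*\<^sup>* u v \<Longrightarrow> u \<in> S \<Longrightarrow>
    \<exists>xs. xs \<noteq> [] \<and> hd xs = u \<and> last xs = v \<and> set xs \<subseteq> S \<and> walk E xs"
proof (induction rule: converse_rtranclp_induct)
  case base
  then show ?case by (intro exI[of _ "[v]"]) (simp add: walk_def)
next
  case (step u u')
  then obtain xs where xs: "xs \<noteq> []" "hd xs = u'" "last xs = v" "set xs \<subseteq> S" "walk E xs"
    by (auto simp: adj_in_def)
  then obtain ys where "xs = u' # ys" by (cases xs) auto
  then show ?case using step xs
    by (intro exI[of _ "u # xs"]) (auto simp: walk_Cons adj_in_def)
qed

lemma connected_in_iff:
  "connected_in E S \<longleftrightarrow> S \<noteq> {} \<and> (\<forall>u\<in>S. \<forall>v\<in>S. (adj_in E S)\<^sup>*\<^sup>* u v)"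
  unfolding connected_in_def by (metis walk_rtranclp_adj_in rtranclp_adj_in_walk)

lemma connected_inI_center:
  assumes "c \<in> S" "\<forall>x\<in>S. (adj_in E S)\<^sup>*\<^sup>* x c"
  shows "connected_in E S"
  unfolding connected_in_iff using assms by (meson empty_iff rtranclp_adj_in_sym rtranclp_trans)

lemma connected_in_set_walk:
  assumes "walk E xs" "xs \<noteq> []"
  shows "connected_in E (set xs)"
proof (rule connected_inI_center[of "last xs"])
  show "last xs \<in> set xs" using assms(2) by simp
  show "\<forall>y\<in>set xs. (adj_in E (set xs))\<^sup>*\<^sup>* y (last xs)"
  proof
    fix y assume "y \<in> set xs"
    then obtain j where j: "j < length xs" "xs ! j = y" by (meson in_set_conv_nth)
    have "(adj_in E (set xs))\<^sup>*\<^sup>* (hd (drop j xs)) (last (drop j xs))"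
      using j by (intro walk_rtranclp_adj_in walk_drop assms(1)) (auto dest: in_set_dropD)
    then show "(adj_in E (set xs))\<^sup>*\<^sup>* y (last xs)" using j by (simp add: hd_drop_conv_nth)
  qed
qed

lemma connected_in_insert_UN:
  assumes "\<And>i. i \<in> I \<Longrightarrow> connected_in E (S i)" and "\<And>i. i \<in> I \<Longrightarrow> c \<in> S i"
  shows "connected_in E (insert c (\<Union>i\<in>I. S i))"
proof (rule connected_inI_center[of c])
  show "\<forall>x\<in>insert c (\<Union>i\<in>I. S i). (adj_in E (insert c (\<Union>i\<in>I. S i)))\<^sup>*\<^sup>* x c"
  proof
    fix x assume "x \<in> insert c (\<Union>i\<in>I. S i)"
    then consider "x = c" | i where "i \<in> I" "x \<in> S i" by blast
    then show "(adj_in E (insert c (\<Union>i\<in>I. S i)))\<^sup>*\<^sup>* x c"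
    proof cases
      case 2
      then have "(adj_in E (S i))\<^sup>*\<^sup>* x c"
        using assms(1)[of i] assms(2)[of i] unfolding connected_in_iff by blast
      then show ?thesis by (rule rtranclp_adj_in_mono) (use 2 in blast)
    qed simp
  qed
qed simp

lemma connected_in_image:
  assumes "connected_in E S"
    and "\<forall>x\<in>S. \<forall>y\<in>S. {x, y} \<in> E \<longrightarrow> f x = f y \<or> {f x, f y} \<in> EH"
  shows "connected_in EH (f ` S)"
  unfolding connected_in_iff
proof (intro conjI ballI)
  show "f ` S \<noteq> {}" using assms(1) unfolding connected_in_iff by blast
  fix a b assume "a \<in> f ` S" "b \<in> f ` S"
  then obtain x y where "x \<in> S" "y \<in> S" "a = f x" "b = f y" by blast
  moreover have "(adj_in E S)\<^sup>*\<^sup>* x y" using assms(1) \<open>x \<in> S\<close> \<open>y \<in> S\<close>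
    unfolding connected_in_iff by blast
  ultimately show "(adj_in EH (f ` S))\<^sup>*\<^sup>* a b" using rtranclp_adj_in_image[OF _ assms(2)] by simp
qed

lemma path_minus_end:
  assumes "walk E p" "distinct p" "Suc 0 < length p" "u \<in> {hd p, last p}"
  shows "connected_in E (set p - {u}) \<and> (\<exists>y\<in>set p - {u}. {u, y} \<in> E)"
proof -
  have minus_hd: "connected_in E (set q - {hd q}) \<and> (\<exists>y\<in>set q - {hd q}. {hd q, y} \<in> E)"
    if "walk E q" "distinct q" "Suc 0 < length q" for q
  proof -
    obtain v r where "q = v # r" "r \<noteq> []" using \<open>Suc 0 < length q\<close> by (cases q) auto
    then obtain y r' where q: "q = v # y # r'" by (cases r) auto
    then have "set q - {hd q} = set (y # r')" using \<open>distinct q\<close> by auto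
    moreover have "connected_in E (set (y # r'))"
      using \<open>walk E q\<close> q by (intro connected_in_set_walk) (auto simp: walk_Cons)
    moreover have "{hd q, y} \<in> E" using \<open>walk E q\<close> q by (simp add: walk_Cons)
    ultimately show ?thesis by auto
  qed
  from assms(4) consider "u = hd p" | "u = last p" by blast
  then show ?thesis
  proof cases
    case 1
    then show ?thesis using minus_hd[OF assms(1-3)] by simp
  next
    case 2
    have "hd (rev p) = u" using 2 by (simp add: hd_rev)
    then show ?thesis using minus_hd[of "rev p"] assms(1-3) by (simp add: walk_rev)
  qed
qed

lemma set_subset_ends_inner_verts:
  "p \<noteq> [] \<Longrightarrow> set p \<subseteq> {hd p, last p} \<union> set (inner_verts p)"
proof -
  assume "p \<noteq> []"
  then obtain x q where p: "p = x # q" by (cases p) auto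
  show ?thesis
  proof (cases "q = []")
    case False
    then have "set q = insert (last q) (set (butlast q))"
      by (metis append_butlast_last_id list.simps(15) rotate1.simps(2) set_rotate1)
    then show ?thesis using p False unfolding inner_verts_def by auto
  qed (simp add: p)
qed

lemma has_complete_minorI:
  assumes "\<And>i. i < n \<Longrightarrow> B i \<subseteq> V" and "\<And>i. i < n \<Longrightarrow> connected_in E (B i)"
    and "\<And>i j. i < j \<Longrightarrow> j < n \<Longrightarrow> B i \<inter> B j = {} \<and> (\<exists>u\<in>B i. \<exists>v\<in>B j. {u, v} \<in> E)"
  shows "has_complete_minor V E n"
proof -
  have pair: "B i \<inter> B j = {} \<and> (\<exists>u\<in>B i. \<exists>v\<in>B j. {u, v} \<in> E)"
    if "i < n" "j < n" "i \<noteq> j" for i j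
  proof (cases "i < j")
    case False
    then have "j < i" using that by linarith
    then have "B j \<inter> B i = {}" "\<exists>u\<in>B j. \<exists>v\<in>B i. {u, v} \<in> E"
      using assms(3) that(1) by simp_all
    then show ?thesis by (auto simp: Int_commute, metis insert_commute)
  qed (simp add: assms(3) that(2))
  show ?thesis unfolding has_complete_minor_def
    by (rule exI[of _ B]) (simp add: assms(1,2) pair)
qed

lemma is_cycle_two_neighbours:
  assumes "is_cycle E xs" "i < length xs"
  shows "\<exists>j1 j2. j1 < length xs \<and> j2 < length xs \<and> j1 \<noteq> j2 \<and>
    {xs ! i, xs ! j1} \<in> E \<and> {xs ! i, xs ! j2} \<in> E"
proof -
  have len: "length xs \<ge> 3" and walk: "walk E xs" and closing: "{last xs, hd xs} \<in> E"
    using assms(1) by (auto simp: is_cycle_def)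
  have "xs \<noteq> []" using len by auto
  then have first_last: "{xs ! 0, xs ! (length xs - 1)} \<in> E"
    using closing by (simp add: hd_conv_nth last_conv_nth insert_commute)
  have step: "\<And>j. Suc j < length xs \<Longrightarrow> {xs ! j, xs ! Suc j} \<in> E"
    using walk by (simp add: walk_def)
  consider "i = 0" | "i = length xs - 1" | "0 < i" "i < length xs - 1" using assms(2) by linarith
  then show ?thesis
  proof cases
    case 1
    then show ?thesis using first_last step[of 0] len
      by (intro exI[of _ 1] exI[of _ "length xs - 1"]) auto
  next
    case 2
    have "{xs ! (length xs - 2), xs ! i} \<in> E"
      using step[of "length xs - 2"] len 2 by (simp add: Suc_diff_Suc numeral_2_eq_2)
    then show ?thesis using first_last 2 len
      by (intro exI[of _ 0] exI[of _ "length xs - 2"]) (auto simp: insert_commute)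
  next
    case 3
    have "{xs ! (i - 1), xs ! i} \<in> E" using step[of "i - 1"] 3 by simp
    then show ?thesis using step[of i] 3
      by (intro exI[of _ "i - 1"] exI[of _ "Suc i"]) (auto simp: insert_commute)
  qed
qed

text \<open>A vertex of maximal rank on a cycle would have two distinct neighbours, both its parent.\<close>
lemma not_is_cycle_if_parent_rank:
  fixes rank :: "'a \<Rightarrow> nat"
  assumes edge: "\<And>x y. {x, y} \<in> E \<Longrightarrow>
    (rank y < rank x \<and> y = parent x) \<or> (rank x < rank y \<and> x = parent y)"
  shows "\<not> is_cycle E xs"
proof
  assume cycle: "is_cycle E xs"
  then have "xs \<noteq> []" and distinct: "distinct xs" by (auto simp: is_cycle_def)
  then obtain x where x: "x \<in> set xs" "rank x = Max (rank ` set xs)"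
    by (metis (mono_tags, lifting) List.finite_set Max_in empty_iff finite_imageI
        image_iff image_is_empty set_empty2)
  have max: "\<And>y. y \<in> set xs \<Longrightarrow> rank y \<le> rank x" using x by simp
  obtain i where i: "i < length xs" "xs ! i = x" using x by (meson in_set_conv_nth)
  obtain j1 j2 where j: "j1 < length xs" "j2 < length xs" "j1 \<noteq> j2"
    "{x, xs ! j1} \<in> E" "{x, xs ! j2} \<in> E"
    using is_cycle_two_neighbours[OF cycle i(1)] i(2) by auto
  have "xs ! j1 = parent x" using edge[OF j(4)] max[of "xs ! j1"] j(1) by auto
  moreover have "xs ! j2 = parent x" using edge[OF j(5)] max[of "xs ! j2"] j(2) by auto
  ultimately show False using j distinct by (metis nth_eq_iff_index_eq)
qed

lemma layering_walk_nth:
  assumes "layering V E L" "walk E p" "set p \<subseteq> V" "i \<le> j" "j < length p"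
  shows "L (p ! j) \<le> L (p ! i) + (j - i) \<and> L (p ! i) \<le> L (p ! j) + (j - i)"
  using assms(4,5)
proof (induction j)
  case (Suc j)
  show ?case
  proof (cases "i = Suc j")
    case False
    have "{p ! j, p ! Suc j} \<in> E" using assms(2) Suc.prems unfolding walk_def by simp
    moreover have "p ! j \<in> V" "p ! Suc j \<in> V" using assms(3) Suc.prems by (auto dest: nth_mem)
    ultimately have "L (p ! Suc j) \<le> L (p ! j) + 1 \<and> L (p ! j) \<le> L (p ! Suc j) + 1"
      using assms(1) unfolding layering_def by blast
    moreover have "L (p ! j) \<le> L (p ! i) + (j - i) \<and> L (p ! i) \<le> L (p ! j) + (j - i)"
      "Suc j - i = Suc (j - i)"
      using Suc False by (auto simp: Suc_diff_le)
    ultimately show ?thesis by linarith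
  qed simp
qed simp

lemma layering_walk:
  assumes "layering V E L" "walk E p" "set p \<subseteq> V" "a \<in> set p" "b \<in> set p"
  shows "L a \<le> L b + (length p - 1)"
proof -
  obtain i j where "i < length p" "p ! i = a" "j < length p" "p ! j = b"
    using assms(4,5) by (meson in_set_conv_nth)
  then show ?thesis
    using layering_walk_nth[OF assms(1-3), of i j] layering_walk_nth[OF assms(1-3), of j i]
    by (cases "i \<le> j") auto
qed

lemma card_fibre_le:
  assumes "finite V" "finite W" "\<And>y. y \<in> V \<Longrightarrow> L y \<in> W"
    and "\<And>i. card {v \<in> V. f v = x \<and> L v = i} \<le> w"
  shows "card {v \<in> V. f v = x} \<le> card W * w"
proof -
  have "card {v \<in> V. f v = x} \<le> card (\<Union>i\<in>W. {v \<in> V. f v = x \<and> L v = i})"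
    by (rule card_mono) (use assms(1,2,3) in auto)
  also have "\<dots> \<le> (\<Sum>i\<in>W. card {v \<in> V. f v = x \<and> L v = i})" by (rule card_UN_le[OF assms(2)])
  also have "\<dots> \<le> card W * w" using sum_bounded_above[of W _ w] assms(4) by simp
  finally show ?thesis .
qed

lemma card_preimage_le:
  assumes "finite B" "\<And>x. x \<in> B \<Longrightarrow> card {v \<in> V. f v = x} \<le> m"
  shows "card {v \<in> V. f v \<in> B} \<le> card B * m"
proof -
  have "{v \<in> V. f v \<in> B} = (\<Union>x\<in>B. {v \<in> V. f v = x})" by blast
  then have "card {v \<in> V. f v \<in> B} \<le> (\<Sum>x\<in>B. card {v \<in> V. f v = x})"
    using card_UN_le[OF assms(1)] by simp
  also have "\<dots> \<le> card B * m" using sum_bounded_above[of B _ m] assms(2) by simp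
  finally show ?thesis .
qed

section \<open>The closure of the complete n-ary tree of depth k\<close>

text \<open>Nodes are words of length at most k over the alphabet {..<n}, the prefixes of a word
  being its ancestors; the injection g encodes them as natural numbers.\<close>
locale tree_closure =
  fixes n k :: nat and g :: "nat list \<Rightarrow> nat"
  assumes inj_g: "inj g"
begin

definition words :: "nat list set" where
  "words = {xs. set xs \<subseteq> {..<n} \<and> length xs \<le> k}"

definition verts :: "nat set" where
  "verts = g ` words"

definition edges :: "nat set set" where
  "edges = {{g (take i xs), g xs} | xs i. xs \<in> words \<and> i < length xs}"

definition tree_edges :: "nat set set" where
  "tree_edges = {{g (butlast xs), g xs} | xs. xs \<in> words \<and> xs \<noteq> []}"

definition bag :: "nat \<Rightarrow> nat set" where
  "bag x = (\<lambda>i. g (take i (inv g x))) ` {..length (inv g x)}"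

lemma g_eq_iff [simp]: "g x = g y \<longleftrightarrow> x = y"
  using inj_g by (auto dest: injD)

lemma bag_g: "bag (g xs) = (\<lambda>i. g (take i xs)) ` {..length xs}"
  using inj_g by (simp add: bag_def)

lemma take_in_words: "xs \<in> words \<Longrightarrow> take i xs \<in> words"
  unfolding words_def using set_take_subset by fastforce

lemma g_in_verts: "xs \<in> words \<Longrightarrow> g xs \<in> verts"
  unfolding verts_def by simp

lemma finite_verts: "finite verts"
  unfolding verts_def words_def by (simp add: finite_lists_length_le)

lemma prefix_edge: "xs \<in> words \<Longrightarrow> i < length xs \<Longrightarrow> {g (take i xs), g xs} \<in> edges"
  unfolding edges_def by blast

lemma edges_subset_verts: "e \<in> edges \<Longrightarrow> e \<subseteq> verts"
  unfolding edges_def using g_in_verts take_in_words by auto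

lemma finite_edges: "finite edges"
  using finite_verts edges_subset_verts by (meson Pow_iff finite_Pow_iff finite_subset subsetI)

lemma graph_verts_edges: "graph verts edges"
  unfolding graph_def
proof (intro conjI ballI finite_verts)
  fix e assume "e \<in> edges"
  then obtain xs i where e: "e = {g (take i xs), g xs}" "xs \<in> words" "i < length xs"
    unfolding edges_def by blast
  have "length (take i xs) < length xs" using e(3) by simp
  then have "take i xs \<noteq> xs" by (metis less_irrefl)
  then show "\<exists>u v. e = {u, v} \<and> u \<noteq> v \<and> u \<in> verts \<and> v \<in> verts"
    using e g_in_verts take_in_words by (intro exI[of _ "g (take i xs)"] exI[of _ "g xs"]) simp
qed

lemma graph_verts_tree_edges: "graph verts tree_edges"
  unfolding graph_def
proof (intro conjI ballI finite_verts)
  fix e assume "e \<in> tree_edges"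
  then obtain xs where e: "e = {g (butlast xs), g xs}" "xs \<in> words" "xs \<noteq> []"
    unfolding tree_edges_def by blast
  have "length (butlast xs) < length xs" using e(3) by simp
  then have "butlast xs \<noteq> xs" by (metis less_irrefl)
  moreover have "butlast xs \<in> words"
    using take_in_words[OF e(2), of "length xs - 1"] by (simp add: butlast_conv_take)
  ultimately show "\<exists>u v. e = {u, v} \<and> u \<noteq> v \<and> u \<in> verts \<and> v \<in> verts"
    using e g_in_verts by (intro exI[of _ "g (butlast xs)"] exI[of _ "g xs"]) simp
qed

lemma tree_edges_prefix_path:
  assumes "xs \<in> words" "m \<le> j" "j \<le> length xs"
    and "\<And>i. m \<le> i \<Longrightarrow> i \<le> length xs \<Longrightarrow> g (take i xs) \<in> S"
  shows "(adj_in tree_edges S)\<^sup>*\<^sup>* (g (take j xs)) (g (take m xs))"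
  using assms(2,3)
proof (induction j)
  case (Suc j)
  show ?case
  proof (cases "m = Suc j")
    case False
    have "take (Suc j) xs \<noteq> []" "butlast (take (Suc j) xs) = take j xs"
      using Suc.prems by (auto simp: butlast_take)
    moreover have "{g (butlast (take (Suc j) xs)), g (take (Suc j) xs)} \<in> tree_edges"
      unfolding tree_edges_def using take_in_words[OF assms(1)] calculation(1) by blast
    ultimately have "{g (take j xs), g (take (Suc j) xs)} \<in> tree_edges" by simp
    then have "adj_in tree_edges S (g (take (Suc j) xs)) (g (take j xs))"
      using assms(4) Suc.prems False unfolding adj_in_def by (auto simp: insert_commute)
    then show ?thesis using Suc False by (auto intro: converse_rtranclp_into_rtranclp)
  qed simp
qed simp

lemma tree_edge_cases:
  assumes "{x, y} \<in> tree_edges"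
  shows "(length (inv g y) < length (inv g x) \<and> y = g (butlast (inv g x))) \<or>
    (length (inv g x) < length (inv g y) \<and> x = g (butlast (inv g y)))"
proof -
  obtain xs where "{x, y} = {g (butlast xs), g xs}" "xs \<noteq> []"
    using assms unfolding tree_edges_def by blast
  then show ?thesis using inj_g by (auto simp: doubleton_eq_iff)
qed

lemma tree_verts_tree_edges: "tree verts tree_edges"
  unfolding tree_def
proof (intro conjI graph_verts_tree_edges)
  show "\<not> (\<exists>xs. is_cycle tree_edges xs)"
    using not_is_cycle_if_parent_rank[OF tree_edge_cases] by blast
  show "connected_in tree_edges verts"
  proof (rule connected_inI_center[of "g []"])
    show "g [] \<in> verts" unfolding verts_def words_def by auto
    show "\<forall>x\<in>verts. (adj_in tree_edges verts)\<^sup>*\<^sup>* x (g [])"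
    proof
      fix x assume "x \<in> verts"
      then obtain xs where xs: "x = g xs" "xs \<in> words" unfolding verts_def by blast
      have "(adj_in tree_edges verts)\<^sup>*\<^sup>* (g (take (length xs) xs)) (g (take 0 xs))"
        by (rule tree_edges_prefix_path[OF xs(2)]) (simp_all add: g_in_verts take_in_words xs(2))
      then show "(adj_in tree_edges verts)\<^sup>*\<^sup>* x (g [])" using xs by simp
    qed
  qed
qed

text \<open>The nodes whose bag contains the node ys are exactly the descendants of ys.\<close>
lemma connected_in_bags_containing:
  assumes "ys \<in> words"
  shows "connected_in tree_edges {t \<in> verts. g ys \<in> bag t}"
proof (rule connected_inI_center[of "g ys"])
  let ?D = "{t \<in> verts. g ys \<in> bag t}"
  have self: "g xs \<in> bag (g xs)" for xs
    unfolding bag_g by (rule image_eqI[of _ _ "length xs"]) auto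
  show "g ys \<in> ?D" using self g_in_verts[OF assms] by simp
  show "\<forall>x\<in>?D. (adj_in tree_edges ?D)\<^sup>*\<^sup>* x (g ys)"
  proof
    fix x assume x: "x \<in> ?D"
    then obtain xs where xs: "x = g xs" "xs \<in> words" unfolding verts_def by blast
    with x obtain m where m: "m \<le> length xs" "ys = take m xs" by (auto simp: bag_g)
    have "g (take i xs) \<in> ?D" if "m \<le> i" "i \<le> length xs" for i
    proof -
      have "g ys = g (take m (take i xs))" "m \<in> {..length (take i xs)}"
        using m that by (simp_all add: min_def)
      then have "g ys \<in> bag (g (take i xs))" unfolding bag_g by blast
      then show ?thesis using g_in_verts take_in_words[OF xs(2)] by simp
    qed
    then show "(adj_in tree_edges ?D)\<^sup>*\<^sup>* x (g ys)"
      using tree_edges_prefix_path[OF xs(2) m(1) order_refl] xs m by simp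
  qed
qed

lemma tw_le_verts_edges: "tw_le verts edges k"
  unfolding tw_le_def
proof (intro exI conjI)
  show "tree_decomposition verts edges verts tree_edges bag"
    unfolding tree_decomposition_def
  proof (intro conjI ballI tree_verts_tree_edges)
    fix t assume "t \<in> verts"
    then show "bag t \<subseteq> verts"
      unfolding verts_def using bag_g g_in_verts take_in_words by auto
  next
    fix v assume "v \<in> verts"
    then obtain ys where "v = g ys" "ys \<in> words" unfolding verts_def by blast
    then show "connected_in tree_edges {t \<in> verts. v \<in> bag t}"
      using connected_in_bags_containing by simp
  next
    fix e assume "e \<in> edges"
    then obtain xs i where "e = {g (take i xs), g xs}" "xs \<in> words" "i < length xs"
      unfolding edges_def by blast
    then have "e \<subseteq> bag (g xs)" unfolding bag_g by (auto intro: image_eqI[of _ _ "length xs"])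
    then show "\<exists>t\<in>verts. e \<subseteq> bag t" using \<open>xs \<in> words\<close> g_in_verts by blast
  qed
  show "\<forall>t\<in>verts. card (bag t) \<le> k + 1"
  proof
    fix t assume "t \<in> verts"
    then obtain xs where xs: "t = g xs" "xs \<in> words" unfolding verts_def by blast
    have "card (bag t) \<le> card {..length xs}" unfolding xs(1) bag_g by (rule card_image_le) simp
    moreover have "length xs \<le> k" using xs(2) unfolding words_def by simp
    ultimately show "card (bag t) \<le> k + 1" by simp
  qed
qed

end

section \<open>Partitions of layered width w of a (\<le> s)-subdivision\<close>

locale layered_subdivision = tree_closure +
  fixes s w :: nat and V' :: "nat set" and E' :: "nat set set" and \<phi> :: "nat \<Rightarrow> nat"
    and P :: "nat set \<Rightarrow> nat list" and VH :: "nat set" and EH :: "nat set set"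
    and f :: "nat \<Rightarrow> nat" and L :: "nat \<Rightarrow> nat"
  assumes inj_\<phi>: "inj_on \<phi> verts" and \<phi>_verts: "\<phi> ` verts \<subseteq> V'"
    and P_ends: "\<forall>e\<in>edges. \<exists>u v. e = {u, v} \<and> hd (P e) = \<phi> u \<and> last (P e) = \<phi> v"
    and P_path: "\<forall>e\<in>edges. P e \<noteq> [] \<and> distinct (P e) \<and> length (P e) \<le> s + 2 \<and>
      set (inner_verts (P e)) \<inter> \<phi> ` verts = {}"
    and P_disjoint: "\<forall>e\<in>edges. \<forall>e'\<in>edges. e \<noteq> e' \<longrightarrow>
      set (inner_verts (P e)) \<inter> set (inner_verts (P e')) = {}"
    and V'_eq: "V' = \<phi> ` verts \<union> (\<Union>e\<in>edges. set (P e))"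
    and E'_eq: "E' = (\<Union>e\<in>edges. path_edges (P e))"
    and partition: "H_partition V' E' VH EH f"
    and layering: "layering V' E' L"
    and width: "\<forall>x i. card {v \<in> V'. f v = x \<and> L v = i} \<le> w"
    and n_large: "k * (1 + k * (s + 2)) * ((4 * s + 5) * w) < n"
begin

lemma finite_V': "finite V'"
  unfolding V'_eq using finite_verts finite_edges by simp

lemma walk_P: "e \<in> edges \<Longrightarrow> walk E' (P e)"
  unfolding walk_def
proof (intro allI impI)
  fix i assume "e \<in> edges" "Suc i < length (P e)"
  then have "{P e ! i, P e ! Suc i} \<in> path_edges (P e)" unfolding path_edges_def by blast
  then show "{P e ! i, P e ! Suc i} \<in> E'" using \<open>e \<in> edges\<close> unfolding E'_eq by blast
qed

lemma set_P_subset: "e \<in> edges \<Longrightarrow> set (P e) \<subseteq> V'"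
  unfolding V'_eq by blast

lemma P_ends_cases:
  assumes "e \<in> edges" "e = {u, v}"
  shows "{hd (P e), last (P e)} = {\<phi> u, \<phi> v}"
proof -
  obtain a b where ab: "e = {a, b}" "hd (P e) = \<phi> a" "last (P e) = \<phi> b"
    using P_ends assms(1) by blast
  then have "(u = a \<and> v = b) \<or> (u = b \<and> v = a)" using assms(2) by (simp add: doubleton_eq_iff)
  then show ?thesis using ab by auto
qed

lemma \<phi>_in_P: "e \<in> edges \<Longrightarrow> x \<in> e \<Longrightarrow> \<phi> x \<in> set (P e)"
proof -
  assume e: "e \<in> edges" and "x \<in> e"
  then obtain u v where "e = {u, v}" "hd (P e) = \<phi> u" "last (P e) = \<phi> v" "x = u \<or> x = v"
    using P_ends by blast
  moreover have "P e \<noteq> []" using e P_path by blast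
  ultimately show ?thesis by (metis hd_in_set last_in_set)
qed

lemma layer_P:
  assumes "e \<in> edges" "a \<in> set (P e)" "b \<in> set (P e)"
  shows "L a \<le> L b + (s + 1)"
proof -
  have "L a \<le> L b + (length (P e) - 1)"
    by (rule layering_walk[OF layering walk_P[OF assms(1)] set_P_subset[OF assms(1)] assms(2,3)])
  moreover have "length (P e) \<le> s + 2" using P_path assms(1) by blast
  ultimately show ?thesis by linarith
qed

definition root :: nat where
  "root = \<phi> (g [])"

lemma layer_\<phi>_near_root:
  assumes "u \<in> verts"
  shows "L (\<phi> u) \<le> L root + (s + 1) \<and> L root \<le> L (\<phi> u) + (s + 1)"
proof -
  obtain xs where xs: "u = g xs" "xs \<in> words" using assms unfolding verts_def by blast
  show ?thesis
  proof (cases "xs = []")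
    case False
    then have e: "{g [], u} \<in> edges" using prefix_edge[OF xs(2), of 0] xs(1) by simp
    have "\<phi> (g []) \<in> set (P {g [], u})" "\<phi> u \<in> set (P {g [], u})" using \<phi>_in_P[OF e] by simp_all
    then show ?thesis unfolding root_def using layer_P[OF e] by blast
  qed (simp add: xs root_def)
qed

text \<open>Every vertex lies on the subdivision path of an edge, one of whose ends is
  at distance at most s+1 from the root.\<close>
lemma layer_near_root:
  assumes "y \<in> V'"
  shows "L y \<le> L root + (2 * s + 2) \<and> L root \<le> L y + (2 * s + 2)"
proof -
  consider u where "u \<in> verts" "y = \<phi> u" | e where "e \<in> edges" "y \<in> set (P e)"
    using assms unfolding V'_eq by blast
  then show ?thesis
  proof cases
    case 1
    then show ?thesis using layer_\<phi>_near_root[OF 1(1)] by simp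
  next
    case 2
    obtain u v where "e = {u, v}" using P_ends 2(1) by blast
    then have u: "u \<in> e" "u \<in> verts" using edges_subset_verts[OF 2(1)] by auto
    then have "\<phi> u \<in> set (P e)" using \<phi>_in_P 2(1) by blast
    then have "L y \<le> L (\<phi> u) + (s + 1)" "L (\<phi> u) \<le> L y + (s + 1)"
      using layer_P[OF 2(1)] 2(2) by blast+
    then show ?thesis using layer_\<phi>_near_root[OF u(2)] by linarith
  qed
qed

lemma card_fibre_V': "card {y \<in> V'. f y = x} \<le> (4 * s + 5) * w"
proof -
  let ?W = "{L root - (2 * s + 2) .. L root + (2 * s + 2)}"
  have "card {y \<in> V'. f y = x} \<le> card ?W * w"
  proof (rule card_fibre_le[OF finite_V'])
    show "L y \<in> ?W" if "y \<in> V'" for y using layer_near_root[OF that] by (simp add: le_diff_conv)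
    show "card {v \<in> V'. f v = x \<and> L v = i} \<le> w" for i using width by blast
  qed simp
  moreover have "card ?W \<le> 4 * s + 5" by simp
  ultimately show ?thesis by (meson le_trans mult_right_mono zero_le)
qed

definition prefix_path :: "nat list \<Rightarrow> nat \<Rightarrow> nat list" where
  "prefix_path cs i = P {g (take i cs), g cs}"

lemma \<phi>_take_neq:
  assumes "cs \<in> words" "i < length cs"
  shows "\<phi> (g (take i cs)) \<noteq> \<phi> (g cs)"
proof -
  have "length (take i cs) < length cs" using assms(2) by simp
  then have "take i cs \<noteq> cs" by (metis less_irrefl)
  then show ?thesis
    using inj_\<phi> g_in_verts assms(1) take_in_words by (metis g_eq_iff inj_on_eq_iff)
qed

lemma
  assumes "cs \<in> words" "i < length cs"
  shows walk_prefix_path: "walk E' (prefix_path cs i)"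
    and distinct_prefix_path: "distinct (prefix_path cs i)"
    and set_prefix_path: "set (prefix_path cs i) \<subseteq> V'"
    and card_set_prefix_path: "card (set (prefix_path cs i)) \<le> s + 2"
    and ends_prefix_path:
      "{hd (prefix_path cs i), last (prefix_path cs i)} = {\<phi> (g (take i cs)), \<phi> (g cs)}"
    and length_prefix_path: "Suc 0 < length (prefix_path cs i)"
proof -
  let ?p = "prefix_path cs i"
  have e: "{g (take i cs), g cs} \<in> edges" using prefix_edge[OF assms] .
  show "walk E' ?p" "set ?p \<subseteq> V'"
    unfolding prefix_path_def using walk_P[OF e] set_P_subset[OF e] by simp_all
  show "distinct ?p" using P_path e unfolding prefix_path_def by blast
  show "card (set ?p) \<le> s + 2"
    using P_path e card_length[of ?p] unfolding prefix_path_def by fastforce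
  show ends: "{hd ?p, last ?p} = {\<phi> (g (take i cs)), \<phi> (g cs)}"
    unfolding prefix_path_def by (rule P_ends_cases[OF e refl])
  then have "hd ?p \<noteq> last ?p" using \<phi>_take_neq[OF assms] by (auto simp: doubleton_eq_iff)
  moreover have "?p \<noteq> []" using P_path e unfolding prefix_path_def by blast
  ultimately show "Suc 0 < length ?p" by (cases ?p; cases "tl ?p") auto
qed

lemma
  assumes "cs \<in> words" "i < length cs"
  defines "S \<equiv> set (prefix_path cs i) - {\<phi> (g (take i cs))}"
  shows connected_prefix_path_minus_ancestor: "connected_in E' S"
    and ancestor_neighbour_in_prefix_path: "\<exists>y\<in>S. {\<phi> (g (take i cs)), y} \<in> E'"
    and \<phi>_in_prefix_path_minus_ancestor: "\<phi> (g cs) \<in> S"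
proof -
  let ?p = "prefix_path cs i"
  have "\<phi> (g (take i cs)) \<in> {hd ?p, last ?p}" "\<phi> (g cs) \<in> {hd ?p, last ?p}"
    using ends_prefix_path[OF assms(1,2)] by simp_all
  then show "connected_in E' S" "\<exists>y\<in>S. {\<phi> (g (take i cs)), y} \<in> E'"
    using path_minus_end[OF walk_prefix_path[OF assms(1,2)] distinct_prefix_path[OF assms(1,2)]
        length_prefix_path[OF assms(1,2)]]
    unfolding S_def by blast+
  have "?p \<noteq> []" using length_prefix_path[OF assms(1,2)] by auto
  then have "\<phi> (g cs) \<in> set ?p" using \<open>\<phi> (g cs) \<in> {hd ?p, last ?p}\<close> by auto
  then show "\<phi> (g cs) \<in> S" unfolding S_def using \<phi>_take_neq[OF assms(1,2)] by simp
qed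

definition branch :: "nat list \<Rightarrow> nat set" where
  "branch cs = insert (\<phi> (g cs))
    (\<Union>i\<in>{..<length cs}. set (prefix_path cs i) - {\<phi> (g (take i cs))})"

lemma \<phi>_in_branch: "\<phi> (g cs) \<in> branch cs"
  unfolding branch_def by simp

lemma branch_subset: "cs \<in> words \<Longrightarrow> branch cs \<subseteq> V'"
  unfolding branch_def using \<phi>_verts g_in_verts set_prefix_path by blast

lemma finite_branch: "cs \<in> words \<Longrightarrow> finite (branch cs)"
  using branch_subset finite_V' finite_subset by blast

lemma card_branch:
  assumes "cs \<in> words"
  shows "card (branch cs) \<le> 1 + k * (s + 2)"
proof -
  let ?S = "\<lambda>i. set (prefix_path cs i) - {\<phi> (g (take i cs))}"
  have "card (?S i) \<le> s + 2" if "i < length cs" for i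
    using card_Diff1_le[of "set (prefix_path cs i)" "\<phi> (g (take i cs))"]
      card_set_prefix_path[OF assms that] by linarith
  then have "(\<Sum>i\<in>{..<length cs}. card (?S i)) \<le> length cs * (s + 2)"
    using sum_bounded_above[of "{..<length cs}" "\<lambda>i. card (?S i)" "s + 2"] by simp
  then have "card (\<Union>i\<in>{..<length cs}. ?S i) \<le> length cs * (s + 2)"
    using card_UN_le[of "{..<length cs}" ?S] by simp
  also have "\<dots> \<le> k * (s + 2)" using assms unfolding words_def by (intro mult_right_mono) simp_all
  finally have "card (\<Union>i\<in>{..<length cs}. ?S i) \<le> k * (s + 2)" .
  moreover have "card (branch cs) \<le> Suc (card (\<Union>i\<in>{..<length cs}. ?S i))"
    unfolding branch_def by (simp add: card_insert_if)
  ultimately show ?thesis by simp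
qed

lemma connected_branch:
  assumes "cs \<in> words"
  shows "connected_in E' (branch cs)"
  unfolding branch_def
proof (rule connected_in_insert_UN)
  fix i assume "i \<in> {..<length cs}"
  then have "i < length cs" by simp
  then show "connected_in E' (set (prefix_path cs i) - {\<phi> (g (take i cs))})"
    and "\<phi> (g cs) \<in> set (prefix_path cs i) - {\<phi> (g (take i cs))}"
    by (rule connected_prefix_path_minus_ancestor[OF assms],
        rule \<phi>_in_prefix_path_minus_ancestor[OF assms])
qed

lemma branch_neighbour:
  assumes "cs \<in> words" "i < length cs"
  shows "\<exists>y\<in>branch cs. {\<phi> (g (take i cs)), y} \<in> E'"
  using ancestor_neighbour_in_prefix_path[OF assms] assms(2) unfolding branch_def by blast

lemma branch_subset_inner_verts:
  assumes "cs \<in> words"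
  shows "branch cs \<subseteq>
    insert (\<phi> (g cs)) (\<Union>i\<in>{..<length cs}. set (inner_verts (prefix_path cs i)))"
proof -
  have "set (prefix_path cs i) - {\<phi> (g (take i cs))} \<subseteq>
      insert (\<phi> (g cs)) (set (inner_verts (prefix_path cs i)))" if "i < length cs" for i
  proof -
    have "prefix_path cs i \<noteq> []" using length_prefix_path[OF assms that] by auto
    then show ?thesis
      using set_subset_ends_inner_verts[of "prefix_path cs i"] ends_prefix_path[OF assms that]
      by auto
  qed
  then show ?thesis unfolding branch_def by blast
qed

text \<open>Branch sets of distinct nodes at the same depth are disjoint: a subdivision path
  towards an ancestor is attributed to its deeper end.\<close>
lemma branch_disjoint:
  assumes cs: "cs \<in> words" and cs': "cs' \<in> words"
    and "length cs = length cs'" "cs \<noteq> cs'"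
  shows "branch cs \<inter> branch cs' = {}"
proof (rule equals0I)
  let ?I = "\<lambda>ys i. set (inner_verts (prefix_path ys i))"
  have \<phi>_ne: "\<phi> (g cs) \<noteq> \<phi> (g cs')"
    using assms inj_\<phi> g_in_verts by (metis g_eq_iff inj_on_eq_iff)
  have \<phi>_notin: "\<phi> (g z) \<notin> ?I ys i" if "z \<in> words" "ys \<in> words" "i < length ys" for z ys i
    using P_path prefix_edge[OF that(2,3)] g_in_verts[OF that(1)] unfolding prefix_path_def
    by blast
  have inner_disjoint: "?I cs i \<inter> ?I cs' i' = {}" if "i < length cs" "i' < length cs'" for i i'
  proof -
    have "take i' cs' \<noteq> cs" using assms(3) that(2) by auto
    then have "g cs \<notin> {g (take i' cs'), g cs'}" using assms(4) by simp
    then have "{g (take i cs), g cs} \<noteq> {g (take i' cs'), g cs'}" by blast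
    then show ?thesis unfolding prefix_path_def
      by (rule P_disjoint[rule_format, OF prefix_edge[OF cs that(1)] prefix_edge[OF cs' that(2)]])
  qed
  have owner: "y = \<phi> (g ys) \<or> (\<exists>i<length ys. y \<in> ?I ys i)"
    if "ys \<in> words" "y \<in> branch ys" for y ys
    using branch_subset_inner_verts[OF that(1)] that(2) by blast
  fix y assume "y \<in> branch cs \<inter> branch cs'"
  with owner[OF cs] owner[OF cs'] show False
    using \<phi>_ne \<phi>_notin[OF cs cs'] \<phi>_notin[OF cs' cs] inner_disjoint by blast
qed

lemma branch_images_adjacent:
  assumes "cs \<in> words" "i < length cs" "f ` branch (take i cs) \<inter> f ` branch cs = {}"
  shows "\<exists>u\<in>f ` branch (take i cs). \<exists>v\<in>f ` branch cs. {u, v} \<in> EH"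
proof -
  let ?x = "\<phi> (g (take i cs))"
  obtain y where y: "y \<in> branch cs" "{?x, y} \<in> E'" using branch_neighbour[OF assms(1,2)] by blast
  have x: "?x \<in> branch (take i cs)" by (rule \<phi>_in_branch)
  then have "?x \<in> V'" "y \<in> V'"
    using branch_subset take_in_words assms(1) y(1) by blast+
  then have "f ?x = f y \<or> {f ?x, f y} \<in> EH" using partition y(2) unfolding H_partition_def by blast
  moreover have "f ?x \<noteq> f y" using assms(3) x y(1) by blast
  ultimately show ?thesis using x y(1) by blast
qed

subsection \<open>A separated root-to-leaf path\<close>

definition separated :: "nat list \<Rightarrow> bool" where
  "separated cs \<longleftrightarrow> (\<forall>i\<le>length cs. \<forall>j\<le>length cs. i \<noteq> j \<longrightarrow>
    f ` branch (take i cs) \<inter> f ` branch (take j cs) = {})"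

text \<open>The branch sets of the n children of cs are disjoint, so at most card B \<cdot> (4s+5)w of
  them can meet the parts in B.\<close>
lemma exists_child_avoiding:
  assumes cs: "cs \<in> words" "length cs < k"
    and "finite B" "card B \<le> k * (1 + k * (s + 2))"
  shows "\<exists>c<n. f ` branch (cs @ [c]) \<inter> B = {}"
proof (rule ccontr)
  have child: "cs @ [c] \<in> words" if "c < n" for c
    using cs that unfolding words_def by auto
  assume "\<not> (\<exists>c<n. f ` branch (cs @ [c]) \<inter> B = {})"
  then have "\<forall>c<n. \<exists>y. y \<in> branch (cs @ [c]) \<and> f y \<in> B" by blast
  then obtain y where y: "\<And>c. c < n \<Longrightarrow> y c \<in> branch (cs @ [c]) \<and> f (y c) \<in> B" by metis
  have inj: "inj_on y {..<n}"
  proof (rule inj_onI)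
    fix a b assume "a \<in> {..<n}" "b \<in> {..<n}" "y a = y b"
    then show "a = b" using branch_disjoint[OF child child, of a b] y[of a] y[of b] by auto
  qed
  have image: "y ` {..<n} \<subseteq> {v \<in> V'. f v \<in> B}"
    using y branch_subset[OF child] by auto
  have "n = card (y ` {..<n})" using card_image[OF inj] by simp
  also have "\<dots> \<le> card {v \<in> V'. f v \<in> B}" by (rule card_mono) (use finite_V' image in auto)
  also have "\<dots> \<le> card B * ((4 * s + 5) * w)"
    by (rule card_preimage_le[OF assms(3) card_fibre_V'])
  also have "\<dots> \<le> k * (1 + k * (s + 2)) * ((4 * s + 5) * w)"
    using assms(4) by (rule mult_right_mono) simp
  finally show False using n_large by simp
qed

lemma separated_snoc:
  assumes "separated cs"
    and "f ` branch (cs @ [c]) \<inter> (\<Union>i\<in>{..length cs}. f ` branch (take i cs)) = {}"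
  shows "separated (cs @ [c])"
  unfolding separated_def
proof (intro allI impI)
  fix i j assume ij: "i \<le> length (cs @ [c])" "j \<le> length (cs @ [c])" "i \<noteq> j"
  have take: "take l (cs @ [c]) = (if l \<le> length cs then take l cs else cs @ [c])"
    if "l \<le> length (cs @ [c])" for l
    using that by auto
  consider "i \<le> length cs" "j \<le> length cs" | "i = Suc (length cs)" "j \<le> length cs"
    | "j = Suc (length cs)" "i \<le> length cs"
    using ij by fastforce
  then show "f ` branch (take i (cs @ [c])) \<inter> f ` branch (take j (cs @ [c])) = {}"
  proof cases
    case 1
    then show ?thesis unfolding take[OF ij(1)] take[OF ij(2)]
      using assms(1) ij(3) unfolding separated_def by simp
  next
    case 2
    then show ?thesis unfolding take[OF ij(1)] take[OF ij(2)] using assms(2) by auto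
  next
    case 3
    then show ?thesis unfolding take[OF ij(1)] take[OF ij(2)] using assms(2) by auto
  qed
qed

lemma card_branch_images:
  assumes "cs \<in> words" "length cs < k"
  shows "card (\<Union>i\<in>{..length cs}. f ` branch (take i cs)) \<le> k * (1 + k * (s + 2))"
proof -
  have "card (\<Union>i\<in>{..length cs}. f ` branch (take i cs)) \<le>
      (\<Sum>i\<in>{..length cs}. card (f ` branch (take i cs)))"
    by (rule card_UN_le) simp
  also have "\<dots> \<le> (\<Sum>i\<in>{..length cs}. 1 + k * (s + 2))"
  proof (rule sum_mono)
    fix i
    have "card (f ` branch (take i cs)) \<le> card (branch (take i cs))"
      by (rule card_image_le[OF finite_branch[OF take_in_words[OF assms(1)]]])
    also have "\<dots> \<le> 1 + k * (s + 2)" by (rule card_branch[OF take_in_words[OF assms(1)]])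
    finally show "card (f ` branch (take i cs)) \<le> 1 + k * (s + 2)" .
  qed
  also have "\<dots> = Suc (length cs) * (1 + k * (s + 2))" by simp
  also have "\<dots> \<le> k * (1 + k * (s + 2))" using assms(2) by (intro mult_right_mono) simp_all
  finally show ?thesis .
qed

lemma exists_separated_word: "j \<le> k \<Longrightarrow> \<exists>cs\<in>words. length cs = j \<and> separated cs"
proof (induction j)
  case 0
  have "[] \<in> words" unfolding words_def by simp
  then show ?case unfolding separated_def by auto
next
  case (Suc j)
  then obtain cs where cs: "cs \<in> words" "length cs = j" "separated cs" by auto
  have short: "length cs < k" using cs Suc.prems by simp
  obtain c where c: "c < n"
    "f ` branch (cs @ [c]) \<inter> (\<Union>i\<in>{..length cs}. f ` branch (take i cs)) = {}"
    using exists_child_avoiding[OF cs(1) short _ card_branch_images[OF cs(1) short]] finite_branch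
      take_in_words cs(1) by auto
  then have "cs @ [c] \<in> words" using cs(1) short unfolding words_def by auto
  then show ?case using separated_snoc[OF cs(3) c(2)] cs(2) by (intro bexI[of _ "cs @ [c]"]) auto
qed

lemma has_complete_minor: "has_complete_minor VH EH (k + 1)"
proof -
  obtain cs where cs: "cs \<in> words" "length cs = k" "separated cs"
    using exists_separated_word by blast
  have prefix: "take i cs \<in> words" for i using take_in_words[OF cs(1)] .
  show ?thesis
  proof (rule has_complete_minorI[of _ "\<lambda>i. f ` branch (take i cs)"])
    fix i
    show "f ` branch (take i cs) \<subseteq> VH"
      using branch_subset[OF prefix] partition unfolding H_partition_def by blast
    show "connected_in EH (f ` branch (take i cs))"
      using connected_branch[OF prefix] branch_subset[OF prefix] partition
      unfolding H_partition_def by (intro connected_in_image) blast+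
  next
    fix i j assume ij: "i < j" "j < k + 1"
    then have "f ` branch (take i cs) \<inter> f ` branch (take j cs) = {}"
      using cs unfolding separated_def by simp
    moreover have "take i (take j cs) = take i cs" using ij by simp
    ultimately show "f ` branch (take i cs) \<inter> f ` branch (take j cs) = {} \<and>
        (\<exists>u\<in>f ` branch (take i cs). \<exists>v\<in>f ` branch (take j cs). {u, v} \<in> EH)"
      using branch_images_adjacent[OF prefix, of i j] ij cs(2) by auto
  qed
qed

end

lemma (in tree_closure) subdivision_partition_has_complete_minor:
  fixes V' :: "nat set" and E' :: "nat set set" and VH :: "nat set" and EH :: "nat set set"
  assumes "k * (1 + k * (s + 2)) * ((4 * s + 5) * w) < n" and "subdivision_le s verts edges V' E'"
    and "H_partition V' E' VH EH f" and "layered_width_le V' E' f w"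
  shows "has_complete_minor VH EH (k + 1)"
proof -
  from assms(2) obtain \<phi> :: "nat \<Rightarrow> nat" and P where subdivision:
    "inj_on \<phi> verts" "\<phi> ` verts \<subseteq> V'"
    "\<forall>e\<in>edges. \<exists>u v. e = {u, v} \<and> hd (P e) = \<phi> u \<and> last (P e) = \<phi> v"
    "\<forall>e\<in>edges. P e \<noteq> [] \<and> distinct (P e) \<and> length (P e) \<le> s + 2 \<and>
      set (inner_verts (P e)) \<inter> \<phi> ` verts = {}"
    "\<forall>e\<in>edges. \<forall>e'\<in>edges. e \<noteq> e' \<longrightarrow>
      set (inner_verts (P e)) \<inter> set (inner_verts (P e')) = {}"
    "V' = \<phi> ` verts \<union> (\<Union>e\<in>edges. set (P e))" "E' = (\<Union>e\<in>edges. path_edges (P e))"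
    unfolding subdivision_le_def by blast
  from assms(4) obtain L
    where "layering V' E' L" "\<forall>x i. card {v \<in> V'. f v = x \<and> L v = i} \<le> w"
    unfolding layered_width_le_def by blast
  then interpret layered_subdivision n k g s w V' E' \<phi> P VH EH f L
    using subdivision assms(1,3) by unfold_locales
  show ?thesis by (rule has_complete_minor)
qed

theorem lemma3p6:
  fixes w k s :: nat
  assumes "w \<ge> 1" and "k \<ge> 1"
  shows "\<exists>(V :: nat set) (E :: nat set set). graph V E \<and> tw_le V E k \<and>
           (\<forall>(V' :: nat set) (E' :: nat set set). subdivision_le s V E V' E' \<longrightarrow>
              (\<forall>(VH :: nat set) (EH :: nat set set) (f :: nat \<Rightarrow> nat).
                 graph VH EH \<and> H_partition V' E' VH EH f \<and> layered_width_le V' E' f w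
                 \<longrightarrow> has_complete_minor VH EH (k + 1)))"
proof -
  define n where "n = k * (1 + k * (s + 2)) * ((4 * s + 5) * w) + 1"
  interpret tree_closure n k "to_nat :: nat list \<Rightarrow> nat" by unfold_locales simp
  have "k * (1 + k * (s + 2)) * ((4 * s + 5) * w) < n" unfolding n_def by simp
  then show ?thesis
    using graph_verts_edges tw_le_verts_edges subdivision_partition_has_complete_minor by blast
qed

end
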